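(* There is an absolute constant $c>0$ such that for all positive integers $n,S,G$ there is a formula on the $n$ input variables $x_1,\dots,x_n$ with formula size at most $S$ and at most $G$ gates, computing a function $f$ with $Q(f)\ge c\min\{n,\sqrt{S},n^{1/2}G^{1/4}\}$.
   Context: A formula on input variables $x_1,\dots,x_n$ is a rooted tree whose leaves are labeled by input variables (the same variable may label many leaves) and whose internal vertices are \textsc{not} gates (fanin 1) or unbounded-fanin \textsc{and}/\textsc{or} gates. The formula size is the number of leaves; the gate count is the number of \textsc{and} and \textsc{or} gates. $Q(f)$ denotes bounded-error quantum query complexity: the minimum number of queries to the oracle $|i,b\rangle\mapsto|i,b\oplus x_i\rangle$ by a quantum algorithm outputting $f(x)$ with probability at least $2/3$ on every input. *)

theory Defs
  imports Complex_Main
begin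

text \<open>Variables are indexed from 0: input variable x_(i+1) is Var i.
  Inputs are x :: nat \<Rightarrow> bool; only the values x 0, ..., x (n-1) matter.\<close>

datatype formula = Var nat | Neg formula | AndG "formula list" | OrG "formula list"

fun eval :: "formula \<Rightarrow> (nat \<Rightarrow> bool) \<Rightarrow> bool" where
  "eval (Var i) x = x i"
| "eval (Neg \<phi>) x = (\<not> eval \<phi> x)"
| "eval (AndG \<phi>s) x = (\<forall>\<psi>\<in>set \<phi>s. eval \<psi> x)"
| "eval (OrG \<phi>s) x = (\<exists>\<psi>\<in>set \<phi>s. eval \<psi> x)"

text \<open>Formula size = number of leaves.\<close>
fun leaves :: "formula \<Rightarrow> nat" where
  "leaves (Var i) = 1"
| "leaves (Neg \<phi>) = leaves \<phi>"
| "leaves (AndG \<phi>s) = sum_list (map leaves \<phi>s)"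
| "leaves (OrG \<phi>s) = sum_list (map leaves \<phi>s)"

text \<open>Gate count = number of AND and OR gates.\<close>
fun gates :: "formula \<Rightarrow> nat" where
  "gates (Var i) = 0"
| "gates (Neg \<phi>) = gates \<phi>"
| "gates (AndG \<phi>s) = Suc (sum_list (map gates \<phi>s))"
| "gates (OrG \<phi>s) = Suc (sum_list (map gates \<phi>s))"

fun vars :: "formula \<Rightarrow> nat set" where
  "vars (Var i) = {i}"
| "vars (Neg \<phi>) = vars \<phi>"
| "vars (AndG \<phi>s) = (\<Union>\<psi>\<in>set \<phi>s. vars \<psi>)"
| "vars (OrG \<phi>s) = (\<Union>\<psi>\<in>set \<phi>s. vars \<psi>)"

text \<open>Computational basis states |i, b, w> with query register i < n, answer bit b,
  and workspace w < m. States are functions from basis labels to amplitudes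
  (zero outside the basis set); operators are matrices indexed by basis labels.\<close>

type_synonym qbasis = "nat \<times> bool \<times> nat"
type_synonym qstate = "qbasis \<Rightarrow> complex"
type_synonym qop = "qbasis \<Rightarrow> qbasis \<Rightarrow> complex"

definition basis_set :: "nat \<Rightarrow> nat \<Rightarrow> qbasis set" where
  "basis_set n m = {..<n} \<times> UNIV \<times> {..<m}"

definition unitary_on :: "qbasis set \<Rightarrow> qop \<Rightarrow> bool" where
  "unitary_on B U \<longleftrightarrow>
     (\<forall>a\<in>B. \<forall>b\<in>B. (\<Sum>c\<in>B. cnj (U c a) * U c b) = (if a = b then 1 else 0))"

definition apply_op :: "qbasis set \<Rightarrow> qop \<Rightarrow> qstate \<Rightarrow> qstate" where
  "apply_op B U v = (\<lambda>a. if a \<in> B then (\<Sum>b\<in>B. U a b * v b) else 0)"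

definition query_op :: "(nat \<Rightarrow> bool) \<Rightarrow> qstate \<Rightarrow> qstate" where
  "query_op x v = (\<lambda>(i, b, w). v (i, b \<noteq> x i, w))"

definition init_state :: qstate where
  "init_state = (\<lambda>a. if a = (0, False, 0) then 1 else 0)"

text \<open>Running U_0, O_x, U_1, O_x, ..., O_x, U_T: the number of queries is length Us - 1.\<close>
fun run :: "qbasis set \<Rightarrow> (nat \<Rightarrow> bool) \<Rightarrow> qop list \<Rightarrow> qstate" where
  "run B x [] = init_state"
| "run B x (U # Us) = fold (\<lambda>V v. apply_op B V (query_op x v)) Us (apply_op B U init_state)"

text \<open>A T-query algorithm with workspace size m (m > 0), unitaries Us (T+1 of them), and
  a final computational-basis measurement whose outcome is post-processed by the accepting set
  Acc (output 1 iff the observed basis label lies in Acc).\<close>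
definition computes :: "nat \<Rightarrow> nat \<Rightarrow> qop list \<Rightarrow> qbasis set \<Rightarrow> ((nat \<Rightarrow> bool) \<Rightarrow> bool) \<Rightarrow> bool" where
  "computes n m Us Acc f \<longleftrightarrow>
     0 < m \<and> Us \<noteq> [] \<and> (\<forall>U\<in>set Us. unitary_on (basis_set n m) U) \<and>
     (\<forall>x. let \<psi> = run (basis_set n m) x Us in
        (if f x then (\<Sum>a\<in>basis_set n m \<inter> Acc. (cmod (\<psi> a))\<^sup>2)
                else (\<Sum>a\<in>basis_set n m - Acc. (cmod (\<psi> a))\<^sup>2)) \<ge> 2/3)"

definition Q :: "nat \<Rightarrow> ((nat \<Rightarrow> bool) \<Rightarrow> bool) \<Rightarrow> nat" where
  "Q n f = Inf {T. \<exists>m Us Acc. computes n m Us Acc f \<and> T = length Us - 1}"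

end

theory Submission
  imports Defs
begin

(* Proof idea (Ambainis' adversary method applied to a parity of ORs).

   For disjoint blocks of b variables each, consider the function that is the
   parity of the k ORs of the blocks.  Inputs with exactly t set bits, no two in the same block,
   have value odd t.  Relating every such input x (t ones) to every input y with t+1 ones that
   arises from x by switching one bit on, each x has at least (k - t) * b neighbours and each y at
   least t + 1.  The adversary bound then gives Q >= sqrt((k - t) * b * (t + 1)) / 51 and, for
   t = k div 2, a bound of order k * sqrt b.

   With k = 2^j the parity of k ORs is a balanced XOR tree, i.e. a formula with
   k^2 * b leaves and 2 k^2 - 1 gates.  Choosing j maximal subject to k <= n, k^2 <= S and
   2 k^2 <= G + 1 and then b as large as the budgets n and S allow, the square of
   min(n, sqrt S, sqrt n * G^(1/4)) is at most 6 k^2 b, which yields the theorem with c = 1/250. *)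


section \<open>Inner products of algorithm states\<close>

definition qinner :: "qbasis set \<Rightarrow> qstate \<Rightarrow> qstate \<Rightarrow> complex" where
  "qinner B u v = (\<Sum>a\<in>B. cnj (u a) * v a)"

definition qnorm2 :: "qbasis set \<Rightarrow> qstate \<Rightarrow> real" where
  "qnorm2 B u = (\<Sum>a\<in>B. (cmod (u a))\<^sup>2)"

lemma finite_basis_set: "finite (basis_set n m)"
  unfolding basis_set_def by auto

lemma qinner_self: "qinner B u u = of_real (qnorm2 B u)"
proof -
  have "cnj z * z = complex_of_real ((cmod z)\<^sup>2)" for z
    by (metis complex_norm_square mult.commute)
  then show ?thesis
    unfolding qinner_def qnorm2_def of_real_sum by simp
qed

lemma qinner_commute: "qinner B v u = cnj (qinner B u v)"
  unfolding qinner_def by (simp add: cnj_sum mult.commute)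

lemma norm_qinner_le: "cmod (qinner B u v) \<le> (\<Sum>a\<in>B. cmod (u a) * cmod (v a))"
  unfolding qinner_def by (rule order.trans[OF norm_sum]) (simp add: norm_mult)

lemma qinner_unitary:
  assumes "finite B" "unitary_on B U"
  shows "qinner B (apply_op B U u) (apply_op B U v) = qinner B u v"
proof -
  have "qinner B (apply_op B U u) (apply_op B U v)
      = (\<Sum>a\<in>B. cnj (\<Sum>b\<in>B. U a b * u b) * (\<Sum>c\<in>B. U a c * v c))"
    unfolding qinner_def apply_op_def by (rule sum.cong) auto
  also have "\<dots> = (\<Sum>a\<in>B. \<Sum>b\<in>B. \<Sum>c\<in>B. (cnj (u b) * v c) * (cnj (U a b) * U a c))"
    unfolding cnj_sum sum_product by (intro sum.cong refl) (simp add: mult_ac)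
  also have "\<dots> = (\<Sum>b\<in>B. \<Sum>c\<in>B. \<Sum>a\<in>B. (cnj (u b) * v c) * (cnj (U a b) * U a c))"
    by (subst sum.swap) (intro sum.cong refl sum.swap)
  also have "\<dots> = (\<Sum>b\<in>B. \<Sum>c\<in>B. (cnj (u b) * v c) * (if b = c then 1 else 0))"
    using assms(2) unfolding unitary_on_def
    by (intro sum.cong refl) (simp add: sum_distrib_left[symmetric])
  also have "\<dots> = qinner B u v"
    unfolding qinner_def using assms(1) by (simp add: if_distrib sum.delta cong: if_cong)
  finally show ?thesis .
qed

lemma qnorm2_unitary:
  assumes "finite B" "unitary_on B U"
  shows "qnorm2 B (apply_op B U u) = qnorm2 B u"
  using qinner_unitary[OF assms, of u u] by (simp add: qinner_self)

lemma xor_twice [simp]: "((b = (\<not> c)) = (\<not> c)) = (b::bool)" "((b = (\<not> c)) = c) = (\<not> b)"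
  by auto

lemma query_op_twice: "query_op x (query_op x v) = v"
  unfolding query_op_def by auto

lemma qinner_query:
  "qinner (basis_set n m) (query_op x u) v = qinner (basis_set n m) u (query_op x v)"
  unfolding qinner_def
  by (rule sum.reindex_bij_witness[where i="\<lambda>(i,b,w). (i, b \<noteq> x i, w)"
        and j="\<lambda>(i,b,w). (i, b \<noteq> x i, w)"]) (auto simp: basis_set_def query_op_def)

lemma qnorm2_query: "qnorm2 (basis_set n m) (query_op x u) = qnorm2 (basis_set n m) u"
  using qinner_query[of n m x u "query_op x u"] by (simp add: qinner_self query_op_twice)

definition query_step :: "qbasis set \<Rightarrow> (nat \<Rightarrow> bool) \<Rightarrow> qop \<Rightarrow> qstate \<Rightarrow> qstate" where
  "query_step B x V v = apply_op B V (query_op x v)"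

lemma run_Cons: "run B x (U # Us) = fold (query_step B x) Us (apply_op B U init_state)"
  by (simp add: query_step_def[abs_def])

lemma qnorm2_query_step:
  assumes "unitary_on (basis_set n m) V"
  shows "qnorm2 (basis_set n m) (query_step (basis_set n m) x V v) = qnorm2 (basis_set n m) v"
  unfolding query_step_def using qnorm2_unitary[OF finite_basis_set assms] qnorm2_query by simp

lemma qnorm2_fold_query_step:
  assumes "\<forall>V\<in>set Vs. unitary_on (basis_set n m) V"
  shows "qnorm2 (basis_set n m) (fold (query_step (basis_set n m) x) Vs v) = qnorm2 (basis_set n m) v"
  using assms by (induction Vs arbitrary: v) (simp_all add: qnorm2_query_step)

lemma qnorm2_init: "0 < n \<Longrightarrow> 0 < m \<Longrightarrow> qnorm2 (basis_set n m) init_state = 1"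
  unfolding qnorm2_def init_state_def using finite_basis_set[of n m]
  by (simp add: if_distrib[of "\<lambda>z. (cmod z)\<^sup>2"] sum.delta basis_set_def cong: if_cong)

lemma qnorm2_run:
  assumes "0 < n" "computes n m Us Acc f"
  shows "qnorm2 (basis_set n m) (run (basis_set n m) x Us) = 1"
proof -
  from assms(2) obtain U Vs where Us: "Us = U # Vs" and m: "0 < m"
    and unit: "\<forall>V\<in>set Us. unitary_on (basis_set n m) V"
    unfolding computes_def by (cases Us) auto
  then show ?thesis
    unfolding Us run_Cons using qnorm2_fold_query_step qnorm2_unitary[OF finite_basis_set]
      qnorm2_init[OF assms(1) m] by simp
qed


section \<open>How much one query can change an inner product\<close>

definition block_weight :: "nat \<Rightarrow> qstate \<Rightarrow> nat \<Rightarrow> real" where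
  "block_weight m u i = (\<Sum>p\<in>(UNIV::bool set) \<times> {..<m}. (cmod (u (i, p)))\<^sup>2)"

lemma sum_basis_set:
  "(\<Sum>a\<in>basis_set n m. g a) = (\<Sum>i<n. \<Sum>p\<in>(UNIV::bool set) \<times> {..<m}. g (i, p))"
  unfolding basis_set_def by (simp add: sum.cartesian_product)

lemma qnorm2_block_weight: "qnorm2 (basis_set n m) u = (\<Sum>i<n. block_weight m u i)"
  unfolding qnorm2_def block_weight_def sum_basis_set ..

lemma block_weight_nonneg: "block_weight m u i \<ge> 0"
  unfolding block_weight_def by (intro sum_nonneg) auto

lemma block_weight_flip_answer:
  "(\<Sum>p\<in>(UNIV::bool set) \<times> {..<m}. (cmod (v (i, \<not> fst p, snd p)))\<^sup>2) = block_weight m v i"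
  unfolding block_weight_def
  by (rule sum.reindex_bij_witness[where i="\<lambda>(b,w). (\<not> b, w)" and j="\<lambda>(b,w). (\<not> b, w)"]) auto

lemma mult_le_weighted_squares:
  fixes \<alpha> a b :: real
  assumes "\<alpha> > 0"
  shows "a * b \<le> \<alpha> / 2 * a\<^sup>2 + b\<^sup>2 / (2 * \<alpha>)"
proof -
  have "0 \<le> (\<alpha> * a - b)\<^sup>2" by simp
  then have "2 * \<alpha> * (a * b) \<le> \<alpha>\<^sup>2 * a\<^sup>2 + b\<^sup>2" by (simp add: power2_eq_square algebra_simps)
  then show ?thesis using assms by (simp add: field_simps power2_eq_square)
qed

lemma norm_diff_squared_le: "(cmod (a - b))\<^sup>2 \<le> 2 * ((cmod a)\<^sup>2 + (cmod b)\<^sup>2)"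
proof -
  have "(cmod (a - b))\<^sup>2 \<le> (cmod a + cmod b)\<^sup>2"
    by (intro power_mono norm_triangle_ineq4) simp
  also have "\<dots> \<le> 2 * ((cmod a)\<^sup>2 + (cmod b)\<^sup>2)"
    by (smt (verit) sum_squares_bound power2_sum)
  finally show ?thesis .
qed

abbreviation flip :: "(nat \<Rightarrow> bool) \<Rightarrow> nat \<Rightarrow> nat \<Rightarrow> bool" where
  "flip x i \<equiv> x(i := \<not> x i)"

lemma qinner_query_change:
  assumes i: "i < n" and y: "y = flip x i" and \<alpha>: "\<alpha> > 0"
  shows "cmod (qinner (basis_set n m) u v)
           - cmod (qinner (basis_set n m) (query_op x u) (query_op y v))
         \<le> \<alpha> * block_weight m u i + (2 / \<alpha>) * block_weight m v i"
proof -
  let ?B = "basis_set n m"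
  let ?P = "(UNIV::bool set) \<times> {..<m}"
  define w where "w = query_op x (query_op y v)"
  have w_off: "w (j, p) = v (j, p)" if "j \<noteq> i" for j p
    using that y unfolding w_def query_op_def by (cases p) auto
  have w_on: "w (i, p) = v (i, \<not> fst p, snd p)" for p
    using y unfolding w_def query_op_def by (cases p) auto
  have after: "qinner ?B (query_op x u) (query_op y v) = qinner ?B u w"
    unfolding w_def qinner_query ..
  have "qinner ?B u w - qinner ?B u v = (\<Sum>j<n. \<Sum>p\<in>?P. cnj (u (j, p)) * (w (j, p) - v (j, p)))"
    unfolding qinner_def sum_subtractf[symmetric] sum_basis_set by (simp add: algebra_simps)
  also have "\<dots> = (\<Sum>p\<in>?P. cnj (u (i, p)) * (w (i, p) - v (i, p)))"
    using i by (subst sum.remove[of _ i]) (auto simp: w_off intro!: sum.neutral)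
  finally have diff: "qinner ?B u w - qinner ?B u v = \<dots>" .
  have sq: "(cmod (w (i, p) - v (i, p)))\<^sup>2 / (2 * \<alpha>)
      \<le> ((cmod (v (i, \<not> fst p, snd p)))\<^sup>2 + (cmod (v (i, p)))\<^sup>2) / \<alpha>" for p
    using norm_diff_squared_le[of "w (i, p)" "v (i, p)"] \<alpha> unfolding w_on by (simp add: field_simps)
  have "cmod (qinner ?B u v) - cmod (qinner ?B u w) \<le> cmod (qinner ?B u w - qinner ?B u v)"
    by (metis norm_minus_commute norm_triangle_ineq2)
  also have "\<dots> \<le> (\<Sum>p\<in>?P. cmod (u (i, p)) * cmod (w (i, p) - v (i, p)))"
    unfolding diff by (rule order.trans[OF norm_sum]) (simp add: norm_mult)
  also have "\<dots> \<le> (\<Sum>p\<in>?P. \<alpha>/2 * (cmod (u (i, p)))\<^sup>2 + (cmod (w (i, p) - v (i, p)))\<^sup>2 / (2*\<alpha>))"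
    by (intro sum_mono mult_le_weighted_squares \<alpha>)
  also have "\<dots> \<le> (\<Sum>p\<in>?P. \<alpha>/2 * (cmod (u (i, p)))\<^sup>2
                     + ((cmod (v (i, \<not> fst p, snd p)))\<^sup>2 + (cmod (v (i, p)))\<^sup>2) / \<alpha>)"
    by (intro sum_mono add_left_mono sq)
  also have "\<dots> = \<alpha>/2 * block_weight m u i + (block_weight m v i + block_weight m v i) / \<alpha>"
    by (simp add: sum.distrib sum_distrib_left sum_divide_distrib[symmetric] add_divide_distrib
        block_weight_flip_answer block_weight_def)
  also have "\<dots> \<le> \<alpha> * block_weight m u i + (2 / \<alpha>) * block_weight m v i"
    using \<alpha> block_weight_nonneg[of m u i] block_weight_nonneg[of m v i] by (simp add: field_simps)
  finally show ?thesis unfolding after .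
qed


section \<open>Final states on inputs with different values are far apart\<close>

lemma qinner_bound_distinguished:
  assumes fin: "finite B" and nu: "qnorm2 B u = 1" and nv: "qnorm2 B v = 1"
    and hu: "(\<Sum>a\<in>B - Acc. (cmod (u a))\<^sup>2) \<ge> 2/3"
    and hv: "(\<Sum>a\<in>B \<inter> Acc. (cmod (v a))\<^sup>2) \<ge> 2/3"
  shows "cmod (qinner B u v) \<le> 17/18"
proof -
  define u_acc where "u_acc = (\<Sum>a\<in>B \<inter> Acc. (cmod (u a))\<^sup>2)"
  define u_rej where "u_rej = (\<Sum>a\<in>B - Acc. (cmod (u a))\<^sup>2)"
  define v_acc where "v_acc = (\<Sum>a\<in>B \<inter> Acc. (cmod (v a))\<^sup>2)"
  define v_rej where "v_rej = (\<Sum>a\<in>B - Acc. (cmod (v a))\<^sup>2)"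
  have u1: "u_acc + u_rej = 1" using nu unfolding u_acc_def u_rej_def qnorm2_def
    by (simp add: sum.Int_Diff[OF fin, of _ Acc])
  have v1: "v_acc + v_rej = 1" using nv unfolding v_acc_def v_rej_def qnorm2_def
    by (simp add: sum.Int_Diff[OF fin, of _ Acc])
  have amgm1: "x * y \<le> 3/4 * x\<^sup>2 + 1/3 * y\<^sup>2" for x y :: real
    using mult_le_weighted_squares[of "3/2" x y] by simp
  have amgm2: "x * y \<le> 1/3 * x\<^sup>2 + 3/4 * y\<^sup>2" for x y :: real
    using mult_le_weighted_squares[of "2/3" x y] by simp
  have "cmod (qinner B u v) \<le> (\<Sum>a\<in>B. cmod (u a) * cmod (v a))" by (rule norm_qinner_le)
  also have "\<dots> = (\<Sum>a\<in>B \<inter> Acc. cmod (u a) * cmod (v a)) + (\<Sum>a\<in>B - Acc. cmod (u a) * cmod (v a))"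
    by (rule sum.Int_Diff[OF fin])
  also have "\<dots> \<le> (\<Sum>a\<in>B \<inter> Acc. 3/4 * (cmod (u a))\<^sup>2 + 1/3 * (cmod (v a))\<^sup>2)
                  + (\<Sum>a\<in>B - Acc. 1/3 * (cmod (u a))\<^sup>2 + 3/4 * (cmod (v a))\<^sup>2)"
    by (intro add_mono sum_mono amgm1 amgm2)
  also have "\<dots> = 3/4 * u_acc + 1/3 * v_acc + (1/3 * u_rej + 3/4 * v_rej)"
    unfolding u_acc_def v_acc_def u_rej_def v_rej_def by (simp add: sum.distrib sum_distrib_left)
  finally show ?thesis using u1 v1 hu hv unfolding u_rej_def[symmetric] v_acc_def[symmetric] by linarith
qed

lemma qinner_run_bound:
  assumes n: "0 < n" and comp: "computes n m Us Acc f" and fxy: "f x \<noteq> f y"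
  shows "cmod (qinner (basis_set n m) (run (basis_set n m) x Us) (run (basis_set n m) y Us)) \<le> 17/18"
proof -
  let ?B = "basis_set n m"
  have acc: "(if f z then (\<Sum>a\<in>?B \<inter> Acc. (cmod (run ?B z Us a))\<^sup>2)
              else (\<Sum>a\<in>?B - Acc. (cmod (run ?B z Us a))\<^sup>2)) \<ge> 2/3" for z
    using comp unfolding computes_def Let_def by blast
  have far: "cmod (qinner ?B (run ?B u Us) (run ?B v Us)) \<le> 17/18" if "\<not> f u" "f v" for u v
    by (rule qinner_bound_distinguished[OF finite_basis_set qnorm2_run[OF n comp] qnorm2_run[OF n comp]])
      (use acc[of u] acc[of v] that in auto)
  show ?thesis
  proof (cases "f x")
    case True
    then show ?thesis using fxy far[of y x] by (simp add: qinner_commute[of _ "run ?B x Us"])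
  next
    case False
    then show ?thesis using fxy far[of x y] by simp
  qed
qed


section \<open>The adversary bound\<close>

definition flip_index :: "nat \<Rightarrow> (nat \<Rightarrow> bool) \<Rightarrow> (nat \<Rightarrow> bool) \<Rightarrow> nat" where
  "flip_index n x y = (SOME i. i < n \<and> y = flip x i)"

lemma flip_index:
  assumes "\<exists>i<n. y = flip x i"
  shows "flip_index n x y < n \<and> y = flip x (flip_index n x y)"
  unfolding flip_index_def using someI_ex[of "\<lambda>i. i < n \<and> y = flip x i"] assms by blast

lemma flip_flip: "flip (flip x i) i = x"
  by (simp add: fun_eq_iff)

text \<open>A unit state spends total weight 1 over the registers; summing its weights at the
  (distinct) positions distinguishing it from its neighbours therefore gives at most 1.\<close>

lemma sum_weights_at_distinct_positions:
  assumes fin: "finite Y" and pos: "\<And>y. y \<in> Y \<Longrightarrow> r y \<Longrightarrow> d y < n"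
    and inj: "inj_on d {y\<in>Y. r y}" and u: "qnorm2 (basis_set n m) u = 1"
  shows "(\<Sum>y\<in>Y. of_bool (r y) * block_weight m u (d y)) \<le> 1"
proof -
  have "(\<Sum>y\<in>Y. of_bool (r y) * block_weight m u (d y)) = (\<Sum>y\<in>{y\<in>Y. r y}. block_weight m u (d y))"
    unfolding sum.inter_filter[OF fin, of "\<lambda>y. block_weight m u (d y)" r] by (intro sum.cong) auto
  also have "\<dots> = (\<Sum>i\<in>d ` {y\<in>Y. r y}. block_weight m u i)"
    using inj by (simp add: sum.reindex)
  also have "\<dots> \<le> (\<Sum>i<n. block_weight m u i)"
    using pos by (intro sum_mono2) (auto simp: block_weight_nonneg)
  finally show ?thesis using u by (simp add: qnorm2_block_weight)
qed

definition progress ::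
    "qbasis set \<Rightarrow> (nat \<Rightarrow> bool) set \<Rightarrow> (nat \<Rightarrow> bool) set \<Rightarrow> ((nat \<Rightarrow> bool) \<Rightarrow> (nat \<Rightarrow> bool) \<Rightarrow> bool)
      \<Rightarrow> ((nat \<Rightarrow> bool) \<Rightarrow> qstate) \<Rightarrow> real" where
  "progress B X Y r s = (\<Sum>x\<in>X. \<Sum>y\<in>Y. of_bool (r x y) * cmod (qinner B (s x) (s y)))"

text \<open>Summed over all related pairs, the weights at the distinguishing positions are at most
  |X| (weights of the X-side states) and |Y| (weights of the Y-side states): for a fixed x the
  positions distinguishing x from its neighbours are distinct, and symmetrically for a fixed y.\<close>

lemma weights_at_flip_positions:
  fixes n m :: nat
  assumes finX: "finite X" and finY: "finite Y"
    and rel: "\<And>x y. x \<in> X \<Longrightarrow> y \<in> Y \<Longrightarrow> r x y \<Longrightarrow> \<exists>i<n. y = flip x i"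
    and unit: "\<And>z. z \<in> X \<union> Y \<Longrightarrow> qnorm2 (basis_set n m) (s z) = 1"
  shows "(\<Sum>x\<in>X. \<Sum>y\<in>Y. of_bool (r x y) * block_weight m (s x) (flip_index n x y)) \<le> card X"
    and "(\<Sum>x\<in>X. \<Sum>y\<in>Y. of_bool (r x y) * block_weight m (s y) (flip_index n x y)) \<le> card Y"
proof -
  have d: "flip_index n x y < n \<and> y = flip x (flip_index n x y)" if "x \<in> X" "y \<in> Y" "r x y" for x y
    using flip_index rel that by blast
  show "(\<Sum>x\<in>X. \<Sum>y\<in>Y. of_bool (r x y) * block_weight m (s x) (flip_index n x y)) \<le> card X"
  proof -
    have "(\<Sum>x\<in>X. \<Sum>y\<in>Y. of_bool (r x y) * block_weight m (s x) (flip_index n x y)) \<le> (\<Sum>x\<in>X. 1)"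
    proof (rule sum_mono)
      fix x assume x: "x \<in> X"
      show "(\<Sum>y\<in>Y. of_bool (r x y) * block_weight m (s x) (flip_index n x y)) \<le> 1"
      proof (rule sum_weights_at_distinct_positions[OF finY])
        show "inj_on (flip_index n x) {y \<in> Y. r x y}"
          by (rule inj_onI) (metis (mono_tags, lifting) d[OF x] mem_Collect_eq)
      qed (use d[OF x] unit x in auto)
    qed
    then show ?thesis by simp
  qed
  show "(\<Sum>x\<in>X. \<Sum>y\<in>Y. of_bool (r x y) * block_weight m (s y) (flip_index n x y)) \<le> card Y"
  proof -
    have "(\<Sum>y\<in>Y. \<Sum>x\<in>X. of_bool (r x y) * block_weight m (s y) (flip_index n x y)) \<le> (\<Sum>y\<in>Y. 1)"
    proof (rule sum_mono)
      fix y assume y: "y \<in> Y"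
      show "(\<Sum>x\<in>X. of_bool (r x y) * block_weight m (s y) (flip_index n x y)) \<le> 1"
      proof (rule sum_weights_at_distinct_positions[OF finX])
        show "inj_on (\<lambda>x. flip_index n x y) {x \<in> X. r x y}"
          by (rule inj_onI) (metis (mono_tags, lifting) d[OF _ y] flip_flip mem_Collect_eq)
      qed (use d[OF _ y] unit y in auto)
    qed
    then show ?thesis by (subst sum.swap) simp
  qed
qed

lemma progress_query_step:
  fixes n m :: nat and \<alpha> :: real
  defines "B \<equiv> basis_set n m"
  assumes finX: "finite X" and finY: "finite Y" and V: "unitary_on B V"
    and rel: "\<And>x y. x \<in> X \<Longrightarrow> y \<in> Y \<Longrightarrow> r x y \<Longrightarrow> \<exists>i<n. y = flip x i"
    and unit: "\<And>z. z \<in> X \<union> Y \<Longrightarrow> qnorm2 B (s z) = 1"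
    and \<alpha>: "\<alpha> > 0"
  shows "progress B X Y r (\<lambda>z. query_step B z V (s z))
         \<ge> progress B X Y r s - (\<alpha> * card X + 2 / \<alpha> * card Y)"
proof -
  define d where "d x y = flip_index n x y" for x y
  have d: "d x y < n \<and> y = flip x (d x y)" if "x \<in> X" "y \<in> Y" "r x y" for x y
    unfolding d_def using flip_index rel that by blast
  have pair: "of_bool (r x y) * cmod (qinner B (s x) (s y))
             - of_bool (r x y) * cmod (qinner B (query_step B x V (s x)) (query_step B y V (s y)))
      \<le> \<alpha> * (of_bool (r x y) * block_weight m (s x) (d x y))
        + 2 / \<alpha> * (of_bool (r x y) * block_weight m (s y) (d x y))"
    if "x \<in> X" "y \<in> Y" for x y
  proof (cases "r x y")
    case True
    then show ?thesis
      using qinner_query_change[of "d x y" n y x \<alpha> m "s x" "s y"] d[OF that True] \<alpha>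
      unfolding query_step_def B_def qinner_unitary[OF finite_basis_set V[unfolded B_def]] by simp
  qed simp
  have wx: "(\<Sum>x\<in>X. \<Sum>y\<in>Y. of_bool (r x y) * block_weight m (s x) (d x y)) \<le> card X"
    and wy: "(\<Sum>x\<in>X. \<Sum>y\<in>Y. of_bool (r x y) * block_weight m (s y) (d x y)) \<le> card Y"
    unfolding d_def using weights_at_flip_positions[OF finX finY rel] unit unfolding B_def by auto
  have "progress B X Y r s - progress B X Y r (\<lambda>z. query_step B z V (s z))
      \<le> (\<Sum>x\<in>X. \<Sum>y\<in>Y. \<alpha> * (of_bool (r x y) * block_weight m (s x) (d x y))
                          + 2 / \<alpha> * (of_bool (r x y) * block_weight m (s y) (d x y)))"
    unfolding progress_def sum_subtractf[symmetric] by (intro sum_mono pair)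
  also have "\<dots> = \<alpha> * (\<Sum>x\<in>X. \<Sum>y\<in>Y. of_bool (r x y) * block_weight m (s x) (d x y))
                 + 2 / \<alpha> * (\<Sum>x\<in>X. \<Sum>y\<in>Y. of_bool (r x y) * block_weight m (s y) (d x y))"
    by (simp add: sum.distrib sum_distrib_left)
  also have "\<dots> \<le> \<alpha> * card X + 2 / \<alpha> * card Y"
    using wx wy \<alpha> by (intro add_mono mult_left_mono) auto
  finally show ?thesis by linarith
qed

lemma progress_fold_query_step:
  fixes n m :: nat and \<alpha> :: real
  defines "B \<equiv> basis_set n m"
  assumes finX: "finite X" and finY: "finite Y" and Vs: "\<forall>V\<in>set Vs. unitary_on B V"
    and rel: "\<And>x y. x \<in> X \<Longrightarrow> y \<in> Y \<Longrightarrow> r x y \<Longrightarrow> \<exists>i<n. y = flip x i"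
    and unit: "\<And>z. z \<in> X \<union> Y \<Longrightarrow> qnorm2 B (s z) = 1"
    and \<alpha>: "\<alpha> > 0"
  shows "progress B X Y r (\<lambda>z. fold (query_step B z) Vs (s z))
         \<ge> progress B X Y r s - length Vs * (\<alpha> * card X + 2 / \<alpha> * card Y)"
  using Vs unit
proof (induction Vs arbitrary: s)
  case Nil
  then show ?case by simp
next
  case (Cons V Vs)
  define s' where "s' z = query_step B z V (s z)" for z
  have unit': "qnorm2 B (s' z) = 1" if "z \<in> X \<union> Y" for z
    unfolding s'_def B_def using qnorm2_query_step Cons.prems that B_def by simp
  have "progress B X Y r (\<lambda>z. fold (query_step B z) Vs (s' z))
         \<ge> progress B X Y r s' - length Vs * (\<alpha> * card X + 2 / \<alpha> * card Y)"
    using Cons.IH[of s'] Cons.prems unit' by simp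
  moreover have "progress B X Y r s' \<ge> progress B X Y r s - (\<alpha> * card X + 2 / \<alpha> * card Y)"
    unfolding s'_def B_def using Cons.prems
    by (intro progress_query_step[OF finX finY _ rel _ \<alpha>]) (auto simp: B_def)
  moreover have "(\<lambda>z. fold (query_step B z) (V # Vs) (s z)) = (\<lambda>z. fold (query_step B z) Vs (s' z))"
    by (simp add: s'_def)
  moreover have "real (length (V # Vs)) * (\<alpha> * card X + 2 / \<alpha> * card Y)
      = real (length Vs) * (\<alpha> * card X + 2 / \<alpha> * card Y) + (\<alpha> * card X + 2 / \<alpha> * card Y)"
    by (simp add: algebra_simps add_divide_distrib)
  ultimately show ?case by (simp only:)
qed

text \<open>Before the first query all states coincide, so the progress equals the number of related
  pairs; after T queries it has dropped by at most T (alpha |X| + (2/alpha) |Y|).\<close>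

lemma progress_run_lower:
  fixes \<alpha> :: real
  assumes comp: "computes n m Us Acc f" and n: "0 < n"
    and finX: "finite X" and finY: "finite Y"
    and rel: "\<And>x y. x \<in> X \<Longrightarrow> y \<in> Y \<Longrightarrow> r x y \<Longrightarrow> \<exists>i<n. y = flip x i"
    and \<alpha>: "\<alpha> > 0"
  shows "progress (basis_set n m) X Y r (\<lambda>z. run (basis_set n m) z Us)
         \<ge> (\<Sum>x\<in>X. \<Sum>y\<in>Y. of_bool (r x y)) - real (length Us - 1) * (\<alpha> * card X + 2 / \<alpha> * card Y)"
proof -
  define B where "B = basis_set n m"
  from comp obtain U Vs where Us: "Us = U # Vs" and "0 < m" and unit: "\<forall>V\<in>set Us. unitary_on B V"
    unfolding computes_def B_def by (cases Us) auto
  define s0 where "s0 = apply_op B U init_state"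
  have s0: "qnorm2 B s0 = 1"
    unfolding s0_def B_def using unit Us qnorm2_unitary[OF finite_basis_set] qnorm2_init[OF n \<open>0 < m\<close>]
    by (simp add: B_def)
  have start: "progress B X Y r (\<lambda>_. s0) = (\<Sum>x\<in>X. \<Sum>y\<in>Y. of_bool (r x y))"
    unfolding progress_def qinner_self s0 by simp
  have run_eq: "run B z Us = fold (query_step B z) Vs s0" for z
    unfolding Us run_Cons s0_def ..
  have "progress B X Y r (\<lambda>z. fold (query_step B z) Vs s0)
         \<ge> progress B X Y r (\<lambda>_. s0) - length Vs * (\<alpha> * card X + 2 / \<alpha> * card Y)"
    unfolding B_def
    by (rule progress_fold_query_step[OF finX finY _ rel _ \<alpha>, where r=r])
      (use unit Us s0 in \<open>auto simp: B_def\<close>)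
  then show ?thesis unfolding B_def[symmetric] run_eq start using Us by simp
qed

lemma progress_run_upper:
  assumes comp: "computes n m Us Acc f" and n: "0 < n"
    and val: "\<And>x y. x \<in> X \<Longrightarrow> y \<in> Y \<Longrightarrow> r x y \<Longrightarrow> f x \<noteq> f y"
  shows "progress (basis_set n m) X Y r (\<lambda>z. run (basis_set n m) z Us)
         \<le> 17/18 * (\<Sum>x\<in>X. \<Sum>y\<in>Y. of_bool (r x y))"
proof -
  have "progress (basis_set n m) X Y r (\<lambda>z. run (basis_set n m) z Us)
      \<le> (\<Sum>x\<in>X. \<Sum>y\<in>Y. of_bool (r x y) * (17/18))"
    unfolding progress_def using qinner_run_bound[OF n comp] val
    by (intro sum_mono) (auto simp: of_bool_def)
  also have "\<dots> = 17/18 * (\<Sum>x\<in>X. \<Sum>y\<in>Y. of_bool (r x y))"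
    by (simp add: sum_distrib_left mult.commute)
  finally show ?thesis .
qed

lemma related_pairs_count:
  fixes m1 m2 :: nat
  assumes finX: "finite X" and finY: "finite Y"
    and degX: "\<And>x. x \<in> X \<Longrightarrow> card {y\<in>Y. r x y} \<ge> m1"
    and degY: "\<And>y. y \<in> Y \<Longrightarrow> card {x\<in>X. r x y} \<ge> m2"
  shows "real m1 * real (card X) \<le> (\<Sum>x\<in>X. \<Sum>y\<in>Y. of_bool (r x y))"
    and "real m2 * real (card Y) \<le> (\<Sum>x\<in>X. \<Sum>y\<in>Y. of_bool (r x y))"
proof -
  have "(\<Sum>x\<in>X. \<Sum>y\<in>Y. of_bool (r x y)) = (\<Sum>x\<in>X. real (card {y\<in>Y. r x y}))"
    using finY by (intro sum.cong refl) (simp add: Int_def)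
  also have "\<dots> \<ge> (\<Sum>x\<in>X. real m1)" using degX by (intro sum_mono) auto
  finally show "real m1 * real (card X) \<le> (\<Sum>x\<in>X. \<Sum>y\<in>Y. of_bool (r x y))"
    by (simp add: mult.commute)
  have "(\<Sum>x\<in>X. \<Sum>y\<in>Y. of_bool (r x y)) = (\<Sum>y\<in>Y. real (card {x\<in>X. r x y}))"
    using finX by (subst sum.swap) (intro sum.cong refl, simp add: Int_def)
  also have "\<dots> \<ge> (\<Sum>y\<in>Y. real m2)" using degY by (intro sum_mono) auto
  finally show "real m2 * real (card Y) \<le> (\<Sum>x\<in>X. \<Sum>y\<in>Y. of_bool (r x y))"
    by (simp add: mult.commute)
qed

lemma adversary_bound_weighted:
  fixes \<alpha> :: real and m1 m2 :: nat
  assumes comp: "computes n m Us Acc f"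
    and finX: "finite X" and finY: "finite Y" and Xne: "X \<noteq> {}"
    and rel: "\<And>x y. x \<in> X \<Longrightarrow> y \<in> Y \<Longrightarrow> r x y \<Longrightarrow> \<exists>i<n. y = flip x i"
    and val: "\<And>x y. x \<in> X \<Longrightarrow> y \<in> Y \<Longrightarrow> r x y \<Longrightarrow> f x \<noteq> f y"
    and degX: "\<And>x. x \<in> X \<Longrightarrow> card {y\<in>Y. r x y} \<ge> m1"
    and degY: "\<And>y. y \<in> Y \<Longrightarrow> card {x\<in>X. r x y} \<ge> m2"
    and m1: "m1 > 0" and m2: "m2 > 0" and \<alpha>: "\<alpha> > 0"
  shows "1/18 \<le> real (length Us - 1) * (\<alpha> / m1 + 2 / (\<alpha> * m2))"
proof -
  define R where "R = (\<Sum>x\<in>X. \<Sum>y\<in>Y. of_bool (r x y) :: real)"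
  define T where "T = real (length Us - 1)"
  obtain x0 where x0: "x0 \<in> X" using Xne by auto
  then have "{y\<in>Y. r x0 y} \<noteq> {}" using degX[OF x0] m1 by (metis card.empty not_le)
  then have n: "0 < n" using rel x0 by fastforce
  note RX = related_pairs_count(1)[OF finX finY degX degY, folded R_def]
  note RY = related_pairs_count(2)[OF finX finY degX degY, folded R_def]
  have R: "R > 0" using RX m1 finX Xne by (smt (verit) card_gt_0_iff of_nat_0_less_iff mult_pos_pos)
  have "R / 18 \<le> T * (\<alpha> * card X + 2 / \<alpha> * card Y)"
    using progress_run_lower[where r=r, OF comp n finX finY rel \<alpha>]
      progress_run_upper[where X=X and Y=Y and r=r, OF comp n val]
    unfolding R_def T_def by linarith
  also have "\<dots> \<le> T * (\<alpha> * (R / m1) + 2 / \<alpha> * (R / m2))"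
    using RX RY m1 m2 \<alpha> by (intro mult_left_mono add_mono) (auto simp: field_simps T_def)
  also have "\<dots> = R * (T * (\<alpha> / m1 + 2 / (\<alpha> * m2)))" by (simp add: field_simps)
  finally have "R * (1/18) \<le> R * (T * (\<alpha> / m1 + 2 / (\<alpha> * m2)))" by simp
  then show ?thesis unfolding T_def by (rule mult_left_le_imp_le[OF _ R])
qed

text \<open>Optimising the weight alpha gives the familiar form T >= sqrt(m1 m2) / 51.\<close>

lemma optimise_weight:
  fixes T m1 m2 :: real
  assumes m1: "m1 > 0" and m2: "m2 > 0" and T: "T \<ge> 0"
    and h: "\<And>\<alpha>. \<alpha> > 0 \<Longrightarrow> 1/18 \<le> T * (\<alpha> / m1 + 2 / (\<alpha> * m2))"
  shows "m1 * m2 \<le> 2592 * T^2"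
proof -
  define \<alpha> where "\<alpha> = sqrt (2 * m1 / m2)"
  have \<alpha>0: "\<alpha> > 0" unfolding \<alpha>_def using m1 m2 by simp
  have \<alpha>2: "\<alpha>^2 = 2 * m1 / m2" unfolding \<alpha>_def using m1 m2 by simp
  have "2 / (\<alpha> * m2) = \<alpha> / m1"
    using \<alpha>0 m1 m2 \<alpha>2 by (simp add: field_simps power2_eq_square)
  then have "1/18 \<le> T * (2 * \<alpha> / m1)" using h[OF \<alpha>0] by simp
  then have "m1 \<le> 36 * T * \<alpha>" using m1 by (simp add: field_simps)
  then have "m1^2 \<le> (36 * T * \<alpha>)^2" using m1 by (intro power_mono) auto
  also have "\<dots> = 1296 * T^2 * (2 * m1 / m2)" unfolding \<alpha>2[symmetric] by (simp add: power_mult_distrib)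
  finally have "m1 * (m1 * m2) \<le> m1 * (2592 * T^2)"
    using m2 by (simp add: field_simps power2_eq_square)
  then show ?thesis using m1 by simp
qed

lemma adversary_bound:
  fixes m1 m2 :: nat
  assumes comp: "computes n m Us Acc f"
    and finX: "finite X" and finY: "finite Y" and Xne: "X \<noteq> {}"
    and rel: "\<And>x y. x \<in> X \<Longrightarrow> y \<in> Y \<Longrightarrow> r x y \<Longrightarrow> \<exists>i<n. y = flip x i"
    and val: "\<And>x y. x \<in> X \<Longrightarrow> y \<in> Y \<Longrightarrow> r x y \<Longrightarrow> f x \<noteq> f y"
    and degX: "\<And>x. x \<in> X \<Longrightarrow> card {y\<in>Y. r x y} \<ge> m1"
    and degY: "\<And>y. y \<in> Y \<Longrightarrow> card {x\<in>X. r x y} \<ge> m2"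
    and m1: "m1 > 0" and m2: "m2 > 0"
  shows "real m1 * real m2 \<le> 2592 * (real (length Us - 1))^2"
  using m1 m2 adversary_bound_weighted[OF assms]
  by (intro optimise_weight) auto


section \<open>Every function of n bits is computed by some algorithm\<close>

text \<open>Q is an infimum; to know that it is attained we exhibit one algorithm for each function
  depending only on x 0, ..., x (n-1): it copies the queried bits one by one into the
  workspace (by permutations of the basis) and finally accepts the basis labels encoding
  inputs on which the function is true.\<close>

definition basis_vec :: "qbasis \<Rightarrow> qstate" where
  "basis_vec s = (\<lambda>a. if a = s then 1 else 0)"

definition perm_op :: "(qbasis \<Rightarrow> qbasis) \<Rightarrow> qop" where
  "perm_op \<sigma> = (\<lambda>a b. if a = \<sigma> b then 1 else 0)"

lemma unitary_perm_op:
  assumes fin: "finite B" and into: "\<And>a. a \<in> B \<Longrightarrow> \<sigma> a \<in> B"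
    and inv: "\<And>a. a \<in> B \<Longrightarrow> \<sigma> (\<sigma> a) = a"
  shows "unitary_on B (perm_op \<sigma>)"
  unfolding unitary_on_def
proof (intro ballI)
  fix a b assume a: "a \<in> B" and b: "b \<in> B"
  have "(\<Sum>c\<in>B. cnj (perm_op \<sigma> c a) * perm_op \<sigma> c b)
      = (\<Sum>c\<in>B. if c = \<sigma> a then (if \<sigma> a = \<sigma> b then 1 else 0) else 0)"
    unfolding perm_op_def by (intro sum.cong refl) auto
  also have "\<dots> = (if a = b then 1 else 0)"
    using fin into[OF a] inv[OF a] inv[OF b] by (simp add: sum.delta) metis
  finally show "(\<Sum>c\<in>B. cnj (perm_op \<sigma> c a) * perm_op \<sigma> c b) = (if a = b then 1 else 0)" .
qed

lemma apply_perm_op: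
  assumes fin: "finite B" and s: "s \<in> B" and \<sigma>s: "\<sigma> s \<in> B"
    and inj: "\<And>a. a \<in> B \<Longrightarrow> \<sigma> a = \<sigma> s \<Longrightarrow> a = s"
  shows "apply_op B (perm_op \<sigma>) (basis_vec s) = basis_vec (\<sigma> s)"
proof
  fix a
  show "apply_op B (perm_op \<sigma>) (basis_vec s) a = basis_vec (\<sigma> s) a"
  proof (cases "a \<in> B")
    case True
    have "(\<Sum>b\<in>B. perm_op \<sigma> a b * basis_vec s b)
        = (\<Sum>b\<in>B. if b = s then (if a = \<sigma> s then 1 else 0) else 0)"
      unfolding perm_op_def basis_vec_def by (intro sum.cong refl) auto
    then show ?thesis using True fin s unfolding apply_op_def basis_vec_def by (simp add: sum.delta)
  next
    case False
    then show ?thesis using \<sigma>s unfolding apply_op_def basis_vec_def by auto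
  qed
qed

lemma apply_perm_op_id: "finite B \<Longrightarrow> s \<in> B \<Longrightarrow> apply_op B (perm_op id) (basis_vec s) = basis_vec s"
  using apply_perm_op[of B s id] by simp

lemma query_basis_vec: "query_op x (basis_vec (i, c, w)) = basis_vec (i, c \<noteq> x i, w)"
  unfolding query_op_def basis_vec_def by (auto simp: fun_eq_iff)

definition prefix_code :: "(nat \<Rightarrow> bool) \<Rightarrow> nat \<Rightarrow> nat" where
  "prefix_code x j = (\<Sum>i<j. if x i then 2^i else 0)"

lemma prefix_code_Suc: "prefix_code x (Suc j) = prefix_code x j + (if x j then 2^j else 0)"
  unfolding prefix_code_def by simp

lemma prefix_code_less: "prefix_code x j < 2^j"
  by (induction j) (simp_all add: prefix_code_def)

lemma prefix_code_le_pow: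
  assumes "j < n"
  shows "prefix_code x j < 2^n"
  using prefix_code_less[of x j] assms
  by (meson less_le_trans power_increasing less_imp_le one_le_numeral)

lemma prefix_code_inj: "prefix_code x j = prefix_code y j \<Longrightarrow> i < j \<Longrightarrow> x i = y i"
proof (induction j arbitrary: i)
  case 0 then show ?case by simp
next
  case (Suc j)
  have top: "(a + (if c then 2^j else 0)) div 2^j = (if c then 1 else 0)"
    and low: "(a + (if c then 2^j else 0)) mod 2^j = a" if "a < (2::nat)^j" for a c
    using that by auto
  have e: "prefix_code x j + (if x j then 2^j else 0) = prefix_code y j + (if y j then 2^j else 0)"
    using Suc.prems(1) by (simp add: prefix_code_Suc)
  have "x j = y j"
    using top[OF prefix_code_less[of x j], of "x j"] top[OF prefix_code_less[of y j], of "y j"] e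
    by (metis zero_neq_one)
  moreover have "prefix_code x j = prefix_code y j"
    using low[OF prefix_code_less[of x j], of "x j"] low[OF prefix_code_less[of y j], of "y j"] e
    by metis
  ultimately show ?case using Suc by (metis less_Suc_eq)
qed

text \<open>The permutation that moves the just-queried bit of register j into the workspace and
  advances to register j+1 (it is an involution; outside its intended domain it is the
  identity or the inverse move).\<close>

definition load_bit :: "nat \<Rightarrow> qbasis \<Rightarrow> qbasis" where
  "load_bit j = (\<lambda>(i,c,w).
     if i = j \<and> w < 2^j then (Suc j, False, w + (if c then 2^j else 0))
     else if i = Suc j \<and> \<not> c \<and> w < 2^Suc j then (j, 2^j \<le> w, w mod 2^j)
     else (i,c,w))"

lemma load_bit_involution: "load_bit j (load_bit j a) = a"
proof -
  obtain i c w where a: "a = (i, c, w)" by (cases a) auto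
  consider "i = j \<and> w < 2^j" | "\<not> (i = j \<and> w < 2^j)" "i = Suc j \<and> \<not> c \<and> w < 2^Suc j"
    | "\<not> (i = j \<and> w < 2^j)" "\<not> (i = Suc j \<and> \<not> c \<and> w < 2^Suc j)" by blast
  then show ?thesis
  proof cases
    case 2
    have "w mod 2^j + (if 2^j \<le> w then 2^j else 0) = w"
      using 2 by (auto simp: le_mod_geq mod_less)
    then show ?thesis using 2 unfolding a load_bit_def by auto
  qed (auto simp: a load_bit_def)
qed

lemma load_bit_in_basis_set:
  assumes "Suc j < n" "a \<in> basis_set n (2^n)"
  shows "load_bit j a \<in> basis_set n (2^n)"
proof -
  obtain i c w where a: "a = (i, c, w)" by (cases a) auto
  have w: "w < 2^n" "i < n" using assms(2) unfolding a basis_set_def by auto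
  have pow: "(2::nat)^Suc j \<le> 2^n" "(2::nat)^j \<le> 2^n"
    using assms(1) power_increasing[of "Suc j" n "2::nat"] power_increasing[of j n "2::nat"] by simp_all
  moreover have "w mod 2^j < 2^n"
    using pow(2) by (meson less_le_trans mod_less_divisor zero_less_numeral zero_less_power)
  ultimately show ?thesis using assms w unfolding a load_bit_def basis_set_def by auto
qed

definition loading_program :: "nat \<Rightarrow> qop list" where
  "loading_program n = perm_op id # map (\<lambda>j. perm_op (load_bit j)) [0..<n-1] @ [perm_op id]"

lemma unitary_loading_program:
  "\<forall>U\<in>set (loading_program n). unitary_on (basis_set n (2^n)) U"
proof -
  have "unitary_on (basis_set n (2^n)) (perm_op id)"
    by (rule unitary_perm_op[OF finite_basis_set]) auto
  moreover have "unitary_on (basis_set n (2^n)) (perm_op (load_bit j))" if "j < n - 1" for j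
    by (rule unitary_perm_op[OF finite_basis_set])
      (use that in \<open>auto intro: load_bit_in_basis_set load_bit_involution\<close>)
  ultimately show ?thesis unfolding loading_program_def by auto
qed

lemma fold_load_bits:
  assumes "j \<le> n - 1" "0 < n"
  shows "fold (query_step (basis_set n (2^n)) x) (map (\<lambda>j. perm_op (load_bit j)) [0..<j])
           (basis_vec (0, False, 0))
         = basis_vec (j, False, prefix_code x j)"
  using assms
proof (induction j)
  case 0
  then show ?case by (simp add: prefix_code_def)
next
  case (Suc j)
  let ?B = "basis_set n (2^n)"
  have j: "Suc j < n" using Suc.prems by simp
  have s: "(j, x j, prefix_code x j) \<in> ?B"
    using j prefix_code_le_pow[of j n x] unfolding basis_set_def by auto
  have "apply_op ?B (perm_op (load_bit j)) (basis_vec (j, x j, prefix_code x j))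
      = basis_vec (load_bit j (j, x j, prefix_code x j))"
    by (rule apply_perm_op[where \<sigma>="load_bit j", OF finite_basis_set s load_bit_in_basis_set[OF j s]])
      (metis load_bit_involution)
  moreover have "load_bit j (j, x j, prefix_code x j) = (Suc j, False, prefix_code x (Suc j))"
    using prefix_code_less[of x j] unfolding load_bit_def by (simp add: prefix_code_Suc)
  ultimately show ?case using Suc by (simp add: query_step_def query_basis_vec)
qed

lemma run_loading_program:
  assumes n: "0 < n"
  shows "run (basis_set n (2^n)) x (loading_program n)
         = basis_vec (n-1, x (n-1), prefix_code x (n-1))"
proof -
  let ?B = "basis_set n (2^n)"
  have start: "(0, False, 0) \<in> ?B" and final: "(n-1, x (n-1), prefix_code x (n-1)) \<in> ?B"
    using n prefix_code_le_pow[of "n-1" n x] unfolding basis_set_def by auto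
  have "init_state = basis_vec (0, False, 0)"
    unfolding init_state_def basis_vec_def ..
  then have "run ?B x (loading_program n)
      = query_step ?B x (perm_op id)
          (fold (query_step ?B x) (map (\<lambda>j. perm_op (load_bit j)) [0..<n-1]) (basis_vec (0, False, 0)))"
    unfolding loading_program_def run_Cons using apply_perm_op_id[OF finite_basis_set start] by simp
  also have "\<dots> = basis_vec (n-1, x (n-1), prefix_code x (n-1))"
    using fold_load_bits[of "n-1" n x] n apply_perm_op_id[OF finite_basis_set final]
    by (simp add: query_step_def query_basis_vec)
  finally show ?thesis .
qed

lemma final_label_determines_input:
  assumes eq: "x (n-1) = y (n-1)" "prefix_code x (n-1) = prefix_code y (n-1)"
    and i: "i < n"
  shows "x i = y i"
proof (cases "i < n - 1")
  case True
  then show ?thesis using prefix_code_inj[OF eq(2)] by simp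
next
  case False
  then have "i = n - 1" using i by simp
  then show ?thesis using eq(1) by simp
qed

lemma basis_vec_probability:
  "finite A \<Longrightarrow> (\<Sum>a\<in>A. (cmod (basis_vec s a))\<^sup>2) = (if s \<in> A then 1 else 0)"
  unfolding basis_vec_def by (simp add: if_distrib[of "\<lambda>z. (cmod z)\<^sup>2"] sum.delta cong: if_cong)

lemma computable:
  assumes n: "0 < n" and dep: "\<And>x y. (\<forall>i<n. x i = y i) \<Longrightarrow> f x = f y"
  shows "\<exists>m Us Acc. computes n m Us Acc f"
proof -
  let ?B = "basis_set n (2^n)"
  define label where "label x = (n-1, x (n-1), prefix_code x (n-1))" for x
  define Acc where "Acc = {label y | y. f y}"
  have label_in: "label x \<in> ?B" for x
    using n prefix_code_le_pow[of "n-1" n x] unfolding basis_set_def label_def by auto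
  have accept: "label x \<in> Acc \<longleftrightarrow> f x" for x
  proof
    assume "label x \<in> Acc"
    then obtain y where y: "label x = label y" "f y" unfolding Acc_def by auto
    then have "\<forall>i<n. x i = y i" using final_label_determines_input[of x n y] by (simp add: label_def)
    then show "f x" using dep y(2) by metis
  qed (auto simp: Acc_def)
  have "computes n (2^n) (loading_program n) Acc f"
    unfolding computes_def
  proof (intro conjI allI)
    show "loading_program n \<noteq> []" by (simp add: loading_program_def)
    fix x
    have "finite (?B \<inter> Acc)" "finite (?B - Acc)" using finite_basis_set by auto
    then show "let \<psi> = run ?B x (loading_program n) in
        (if f x then \<Sum>a\<in>?B \<inter> Acc. (cmod (\<psi> a))\<^sup>2 else \<Sum>a\<in>?B - Acc. (cmod (\<psi> a))\<^sup>2) \<ge> 2/3"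
      unfolding Let_def run_loading_program[OF n] label_def[symmetric]
      using label_in[of x] accept[of x] by (simp add: basis_vec_probability)
  qed (simp_all add: unitary_loading_program)
  then show ?thesis by blast
qed

lemma Q_attained:
  assumes "\<exists>m Us Acc. computes n m Us Acc f"
  shows "\<exists>m Us Acc. computes n m Us Acc f \<and> Q n f = length Us - 1"
proof -
  let ?S = "{T. \<exists>m Us Acc. computes n m Us Acc f \<and> T = length Us - 1}"
  have "\<exists>T. T \<in> ?S" using assms by blast
  then have "Inf ?S \<in> ?S" unfolding Inf_nat_def by (rule LeastI_ex)
  then show ?thesis unfolding Q_def by blast
qed


section \<open>XOR trees of ORs as formulas\<close>

definition or_block :: "nat \<Rightarrow> nat \<Rightarrow> formula" where
  "or_block b i = OrG (map (\<lambda>p. Var (i * b + p)) [0..<b])"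

lemma eval_or_block: "eval (or_block b i) x = (\<exists>p<b. x (i * b + p))"
  unfolding or_block_def by auto

definition xor_formula :: "formula \<Rightarrow> formula \<Rightarrow> formula" where
  "xor_formula A B = OrG [AndG [A, Neg B], AndG [Neg A, B]]"

fun xor_tree :: "nat \<Rightarrow> (nat \<Rightarrow> formula) \<Rightarrow> nat \<Rightarrow> formula" where
  "xor_tree 0 g off = g off"
| "xor_tree (Suc j) g off = xor_formula (xor_tree j g off) (xor_tree j g (off + 2^j))"

definition count_true :: "(nat \<Rightarrow> bool) \<Rightarrow> nat \<Rightarrow> nat \<Rightarrow> nat" where
  "count_true E off N = (\<Sum>i<N. if E (off + i) then 1 else 0)"

lemma count_true_add: "count_true E off (N + M) = count_true E off N + count_true E (off + N) M"
  by (induction M) (simp_all add: count_true_def add.assoc)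

lemma count_true_card: "count_true E 0 k = card {i. i < k \<and> E i}"
  unfolding count_true_def by (simp add: sum.If_cases Int_def lessThan_def conj_commute)

lemma eval_xor_tree: "eval (xor_tree j g off) x = odd (count_true (\<lambda>i. eval (g i) x) off (2^j))"
proof (induction j arbitrary: off)
  case 0
  then show ?case by (simp add: count_true_def)
next
  case (Suc j)
  then show ?case
    using count_true_add[of "\<lambda>i. eval (g i) x" off "2^j" "2^j"]
    by (auto simp: xor_formula_def mult_2)
qed

text \<open>Each XOR node quadruples the leaves; with single-gate inputs a tree of depth j has
  2 * 4^j - 1 gates.\<close>

lemma leaves_xor_tree: "(\<And>i. leaves (g i) = L) \<Longrightarrow> leaves (xor_tree j g off) = 4^j * L"
  by (induction j arbitrary: off) (simp_all add: xor_formula_def)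

lemma gates_xor_tree: "(\<And>i. gates (g i) = 1) \<Longrightarrow> gates (xor_tree j g off) + 1 = 2 * 4^j"
proof (induction j arbitrary: off)
  case 0
  then show ?case by simp
next
  case (Suc j)
  then have "gates (xor_tree j g off) + 1 = 2 * 4^j" "gates (xor_tree j g (off + 2^j)) + 1 = 2 * 4^j"
    by auto
  then show ?case by (simp add: xor_formula_def)
qed

lemma vars_xor_tree: "vars (xor_tree j g off) \<subseteq> (\<Union>i<2^j. vars (g (off + i)))"
proof (induction j arbitrary: off)
  case 0
  then show ?case by auto
next
  case (Suc j)
  have "(\<Union>i<2^j. vars (g (off + 2^j + i))) \<subseteq> (\<Union>i<2^Suc j. vars (g (off + i)))"
  proof
    fix v assume "v \<in> (\<Union>i<2^j. vars (g (off + 2^j + i)))"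
    then obtain i where "i < 2^j" "v \<in> vars (g (off + (2^j + i)))" by (auto simp: add.assoc)
    then show "v \<in> (\<Union>i<2^Suc j. vars (g (off + i)))" by (intro UN_I[of "2^j + i"]) auto
  qed
  moreover have "(\<Union>i<2^j. vars (g (off + i))) \<subseteq> (\<Union>i<2^Suc j. vars (g (off + i)))"
    by (intro UN_mono) auto
  ultimately show ?case using Suc[of off] Suc[of "off + 2^j"] by (auto simp: xor_formula_def)
qed

lemma block_index_less:
  assumes "j < k" "p < (b::nat)"
  shows "j * b + p < k * b"
proof -
  have "j * b + p < (j + 1) * b" using assms(2) by simp
  also have "\<dots> \<le> k * b" using assms(1) by (intro mult_right_mono) auto
  finally show ?thesis .
qed

definition xor_of_ors :: "nat \<Rightarrow> nat \<Rightarrow> formula" where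
  "xor_of_ors j b = xor_tree j (or_block b) 0"

lemma xor_of_ors:
  shows "vars (xor_of_ors j b) \<subseteq> {..<2^j * b}"
    and "leaves (xor_of_ors j b) = 4^j * b"
    and "gates (xor_of_ors j b) + 1 = 2 * 4^j"
    and "eval (xor_of_ors j b) x = odd (count_true (\<lambda>i. \<exists>p<b. x (i * b + p)) 0 (2^j))"
proof -
  show "vars (xor_of_ors j b) \<subseteq> {..<2^j * b}"
    using vars_xor_tree[of j "or_block b" 0] block_index_less[of _ "2^j" _ b]
    unfolding xor_of_ors_def or_block_def by fastforce
  show "leaves (xor_of_ors j b) = 4^j * b"
    unfolding xor_of_ors_def by (rule leaves_xor_tree) (simp add: or_block_def comp_def sum_list_triv)
  show "gates (xor_of_ors j b) + 1 = 2 * 4^j"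
    unfolding xor_of_ors_def by (rule gates_xor_tree) (simp add: or_block_def comp_def sum_list_triv)
  show "eval (xor_of_ors j b) x = odd (count_true (\<lambda>i. \<exists>p<b. x (i * b + p)) 0 (2^j))"
    unfolding xor_of_ors_def eval_xor_tree eval_or_block ..
qed

lemma eval_cong_vars: "(\<forall>i\<in>vars \<phi>. x i = y i) \<Longrightarrow> eval \<phi> x = eval \<phi> y"
  by (induction \<phi>) simp_all


section \<open>The adversary relation on block-sparse inputs\<close>

definition set_input :: "nat set \<Rightarrow> nat \<Rightarrow> bool" where
  "set_input P = (\<lambda>i. i \<in> P)"

lemma set_input_inj: "set_input P = set_input P' \<Longrightarrow> P = P'"
  unfolding set_input_def by (metis Collect_mem_eq)

lemma set_input_insert: "q \<notin> P \<Longrightarrow> set_input (insert q P) = flip (set_input P) q"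
  unfolding set_input_def by (auto simp: fun_eq_iff)

lemma set_input_remove: "q \<in> P \<Longrightarrow> set_input P = flip (set_input (P - {q})) q"
  unfolding set_input_def by (auto simp: fun_eq_iff)

definition sparse_sets :: "nat \<Rightarrow> nat \<Rightarrow> nat \<Rightarrow> nat set set" where
  "sparse_sets k b t = {P. P \<subseteq> {..<k * b} \<and> inj_on (\<lambda>p. p div b) P \<and> card P = t}"

lemma finite_sparse_sets: "finite (sparse_sets k b t)"
  by (rule finite_subset[of _ "Pow {..<k * b}"]) (auto simp: sparse_sets_def)

lemma sparse_sets_nonempty:
  assumes b: "(b::nat) > 0" and t: "t \<le> k"
  shows "(\<lambda>j. j * b) ` {..<t} \<in> sparse_sets k b t"
proof -
  have inj: "inj_on (\<lambda>j. j * b) {..<t}" using b by (intro inj_onI) simp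
  have "(\<lambda>j. j * b) ` {..<t} \<subseteq> {..<k * b}"
    using t b block_index_less[of _ k 0 b] by auto
  moreover have "inj_on (\<lambda>p. p div b) ((\<lambda>j. j * b) ` {..<t})"
    using b by (intro inj_onI) auto
  ultimately show ?thesis unfolding sparse_sets_def using card_image[OF inj] by simp
qed

lemma blocks_hit:
  assumes b: "(b::nat) > 0" and P: "P \<subseteq> {..<k * b}"
  shows "{i. i < k \<and> (\<exists>p<b. i * b + p \<in> P)} = (\<lambda>p. p div b) ` P"
proof
  show "{i. i < k \<and> (\<exists>p<b. i * b + p \<in> P)} \<subseteq> (\<lambda>p. p div b) ` P"
    by (auto intro!: image_eqI)
  show "(\<lambda>p. p div b) ` P \<subseteq> {i. i < k \<and> (\<exists>p<b. i * b + p \<in> P)}"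
  proof
    fix i assume "i \<in> (\<lambda>p. p div b) ` P"
    then obtain q where q: "q \<in> P" "i = q div b" by auto
    then have "i < k" using P b by (auto simp: less_mult_imp_div_less)
    moreover have "i * b + q mod b \<in> P" "q mod b < b" using q b by simp_all
    ultimately show "i \<in> {i. i < k \<and> (\<exists>p<b. i * b + p \<in> P)}" by blast
  qed
qed

lemma xor_of_ors_sparse:
  assumes b: "b > 0" and P: "P \<in> sparse_sets (2^j) b t"
  shows "eval (xor_of_ors j b) (set_input P) = odd t"
proof -
  have sub: "P \<subseteq> {..<2^j * b}" and inj: "inj_on (\<lambda>p. p div b) P" and card: "card P = t"
    using P unfolding sparse_sets_def by auto
  show ?thesis
    unfolding xor_of_ors(4) count_true_card
    using blocks_hit[OF b sub] card_image[OF inj] card by (simp add: set_input_def)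
qed

text \<open>Each sparse set with t < k elements has at least (k - t) * b sparse one-bit extensions:
  any position in one of the k - t blocks it misses.\<close>

lemma sparse_up_neighbours:
  assumes b: "(b::nat) > 0" and kbn: "k * b \<le> n" and P: "P \<in> sparse_sets k b t"
  shows "card {y \<in> set_input ` sparse_sets k b (t+1). \<exists>i<n. y = flip (set_input P) i} \<ge> (k - t) * b"
proof -
  have Psub: "P \<subseteq> {..<k * b}" and inj: "inj_on (\<lambda>p. p div b) P" and cP: "card P = t"
    using P unfolding sparse_sets_def by auto
  define D where "D = (\<lambda>p. p div b) ` P"
  have Dsub: "D \<subseteq> {..<k}" unfolding D_def using Psub b by (auto simp: less_mult_imp_div_less)
  have cD: "card D = t" unfolding D_def using card_image[OF inj] cP by simp
  define E where "E = {..<k} - D"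
  define Qs where "Qs = (\<lambda>(j,p). j * b + p) ` (E \<times> {..<b})"
  have "inj_on (\<lambda>(j,p). j * b + p) (E \<times> {..<b})"
  proof (rule inj_onI, clarify)
    fix j p j' p' assume lt: "p < b" "p' < b" and eq: "j * b + p = j' * b + p'"
    have "j = (j * b + p) div b" "p = (j * b + p) mod b" using lt(1) by simp_all
    moreover have "j' = (j' * b + p') div b" "p' = (j' * b + p') mod b" using lt(2) by simp_all
    ultimately show "j = j' \<and> p = p'" using eq by simp
  qed
  then have cQ: "card Qs = (k - t) * b"
    unfolding Qs_def E_def using Dsub cD
    by (simp add: card_image card_cartesian_product card_Diff_subset finite_subset)
  have new: "q < k * b" "q div b \<notin> D" if "q \<in> Qs" for q
    using that block_index_less unfolding Qs_def E_def by auto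
  have new_notin: "q \<notin> P" if "q \<in> Qs" for q
    using new(2)[OF that] unfolding D_def by auto
  have sub: "flip (set_input P) ` Qs \<subseteq> {y \<in> set_input ` sparse_sets k b (t+1). \<exists>i<n. y = flip (set_input P) i}"
  proof
    fix y assume "y \<in> flip (set_input P) ` Qs"
    then obtain q where q: "q \<in> Qs" "y = flip (set_input P) q" by auto
    have "insert q P \<in> sparse_sets k b (t+1)"
      unfolding sparse_sets_def using Psub inj cP new[OF q(1)] new_notin[OF q(1)] finite_subset[OF Psub]
      by (auto simp: D_def)
    moreover have "y = set_input (insert q P)" using q(2) set_input_insert new_notin[OF q(1)] by simp
    moreover have "q < n" using new(1)[OF q(1)] kbn by simp
    ultimately show "y \<in> {y \<in> set_input ` sparse_sets k b (t+1). \<exists>i<n. y = flip (set_input P) i}"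
      using q(2) by blast
  qed
  have inj_flip: "inj_on (flip (set_input P)) Qs"
    by (rule inj_onI) (metis fun_upd_apply)
  have "finite {y \<in> set_input ` sparse_sets k b (t+1). \<exists>i<n. y = flip (set_input P) i}"
    using finite_sparse_sets by simp
  then show ?thesis using card_mono[OF _ sub] card_image[OF inj_flip] cQ by simp
qed

lemma sparse_down_neighbours:
  assumes b: "(b::nat) > 0" and kbn: "k * b \<le> n" and P: "P \<in> sparse_sets k b (t+1)"
  shows "card {x \<in> set_input ` sparse_sets k b t. \<exists>i<n. set_input P = flip x i} \<ge> t + 1"
proof -
  have Psub: "P \<subseteq> {..<k * b}" and inj: "inj_on (\<lambda>p. p div b) P" and cP: "card P = t + 1"
    using P unfolding sparse_sets_def by auto
  have finP: "finite P" using finite_subset[OF Psub] by simp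
  have sub: "(\<lambda>q. set_input (P - {q})) ` P \<subseteq> {x \<in> set_input ` sparse_sets k b t. \<exists>i<n. set_input P = flip x i}"
  proof
    fix x assume "x \<in> (\<lambda>q. set_input (P - {q})) ` P"
    then obtain q where q: "q \<in> P" "x = set_input (P - {q})" by auto
    have "P - {q} \<in> sparse_sets k b t"
      unfolding sparse_sets_def using Psub inj cP finP q(1) by (auto intro: inj_on_subset)
    moreover have "q < n" using q(1) Psub kbn by auto
    ultimately show "x \<in> {x \<in> set_input ` sparse_sets k b t. \<exists>i<n. set_input P = flip x i}"
      using q set_input_remove[OF q(1)] by blast
  qed
  have inj_remove: "inj_on (\<lambda>q. set_input (P - {q})) P"
  proof (rule inj_onI)
    fix q q' assume "q \<in> P" "q' \<in> P" "set_input (P - {q}) = set_input (P - {q'})"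
    then show "q = q'" using set_input_inj by blast
  qed
  have "finite {x \<in> set_input ` sparse_sets k b t. \<exists>i<n. set_input P = flip x i}"
    using finite_sparse_sets by simp
  then show ?thesis using card_mono[OF _ sub] card_image[OF inj_remove] cP by simp
qed

lemma middle_layer_product: "(k::nat) * k \<le> 4 * ((k - k div 2) * (k div 2 + 1))"
proof (cases "even k")
  case True
  then obtain t where "k = 2 * t" by blast
  then show ?thesis by (simp add: algebra_simps)
next
  case False
  then obtain t where "k = 2 * t + 1" using oddE by blast
  then show ?thesis by (simp add: algebra_simps)
qed

text \<open>Lower bound for any function that is the parity of the number of true positions on
  block-sparse inputs: apply the adversary bound at the middle layer t = k div 2.\<close>

lemma Q_lower_bound_block_parity:
  assumes b: "(b::nat) > 0" and k: "k > 0" and kbn: "k * b \<le> n"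
    and parity: "\<And>t P. P \<in> sparse_sets k b t \<Longrightarrow> f (set_input P) = odd t"
    and comp: "\<exists>m Us Acc. computes n m Us Acc f"
  shows "real (k * k * b) \<le> 10368 * (real (Q n f))^2"
proof -
  obtain m Us Acc where c: "computes n m Us Acc f" and Q: "Q n f = length Us - 1"
    using Q_attained[OF comp] by blast
  define t where "t = k div 2"
  have tk: "t < k" using k unfolding t_def by simp
  have "real ((k - t) * b) * real (t + 1) \<le> 2592 * (real (Q n f))^2"
    unfolding Q
  proof (rule adversary_bound[OF c, where X="set_input ` sparse_sets k b t"
        and Y="set_input ` sparse_sets k b (t+1)" and r="\<lambda>x y. \<exists>i<n. y = flip x i"])
    show "set_input ` sparse_sets k b t \<noteq> {}" using sparse_sets_nonempty[OF b, of t k] tk by auto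
    show "f x \<noteq> f y" if "x \<in> set_input ` sparse_sets k b t" "y \<in> set_input ` sparse_sets k b (t + 1)"
      for x y using that parity by auto
    show "card {y \<in> set_input ` sparse_sets k b (t + 1). \<exists>i<n. y = flip x i} \<ge> (k - t) * b"
      if "x \<in> set_input ` sparse_sets k b t" for x
      using that sparse_up_neighbours[OF b kbn] by blast
    show "card {x \<in> set_input ` sparse_sets k b t. \<exists>i<n. y = flip x i} \<ge> t + 1"
      if "y \<in> set_input ` sparse_sets k b (t + 1)" for y
      using that sparse_down_neighbours[OF b kbn] by blast
  qed (use finite_sparse_sets b tk in simp_all)
  moreover have "k * k * b \<le> 4 * ((k - t) * b * (t + 1))"
    using mult_le_mono1[OF middle_layer_product[of k], of b] unfolding t_def
    by (simp add: algebra_simps)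
  then have "real (k * k * b) \<le> 4 * (real ((k - t) * b) * real (t + 1))"
    by (metis of_nat_le_iff of_nat_mult of_nat_numeral)
  ultimately show ?thesis by linarith
qed


section \<open>Choice of parameters\<close>

definition target :: "nat \<Rightarrow> nat \<Rightarrow> nat \<Rightarrow> real" where
  "target n S G = min (real n) (min (sqrt (real S)) (sqrt (real n) * real G powr (1/4)))"

lemma target_bounds:
  shows "0 \<le> target n S G" "target n S G \<le> real n" "(target n S G)^2 \<le> real S"
    and "(target n S G)^2 \<le> real n * sqrt (real G)"
proof -
  let ?M = "target n S G"
  show M0: "0 \<le> ?M" "?M \<le> real n" unfolding target_def by simp_all
  have "?M^2 \<le> (sqrt (real S))^2" using M0 by (intro power_mono) (auto simp: target_def)
  then show "?M^2 \<le> real S" by simp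
  have "?M^2 \<le> (sqrt (real n) * real G powr (1/4))^2"
    using M0 by (intro power_mono) (auto simp: target_def)
  also have "\<dots> = real n * (real G powr (1/4) * real G powr (1/4))"
    by (simp add: power_mult_distrib power2_eq_square)
  also have "real G powr (1/4) * real G powr (1/4) = sqrt (real G)"
    by (simp add: powr_add[symmetric] powr_half_sqrt)
  finally show "?M^2 \<le> real n * sqrt (real G)" .
qed

lemma target_le_maximal_scale:
  fixes n S G k :: nat
  assumes maximal: "\<not> (2 * k \<le> n \<and> 4 * (k * k) \<le> S \<and> 8 * (k * k) \<le> G + 1)"
  shows "(target n S G)^2 \<le> 3 * real n * real k"
proof -
  let ?M = "target n S G"
  note M = target_bounds[of n S G]
  have Mn: "?M^2 \<le> ?M * real n" using M(1,2) by (simp add: power2_eq_square mult_left_mono)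
  consider "n < 2 * k" | "S < 4 * (k * k)" | "G + 1 < 8 * (k * k)" using maximal by linarith
  then show ?thesis
  proof cases
    case 1
    then have "?M * real n \<le> real n * (2 * real k)"
      using M(2) by (intro mult_mono) auto
    moreover have "real n * (2 * real k) = 2 * (real n * real k)"
      "3 * real n * real k = 3 * (real n * real k)" "0 \<le> real n * real k" by simp_all
    ultimately show ?thesis using Mn by linarith
  next
    case 2
    then have "real S < 4 * real k * real k"
      by (metis of_nat_less_iff of_nat_mult of_nat_numeral mult.assoc)
    then have "?M^2 < (2 * real k)^2" using M(3) by (simp add: power2_eq_square)
    then have "?M < 2 * real k" by (rule power_less_imp_less_base) simp
    then have "?M * real n \<le> 2 * real k * real n" by (simp add: mult_right_mono)
    moreover have "2 * real k * real n = 2 * (real n * real k)"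
      "3 * real n * real k = 3 * (real n * real k)" "0 \<le> real n * real k" by simp_all
    ultimately show ?thesis using Mn by linarith
  next
    case 3
    then have "real G < 8 * real k * real k"
      by (metis add_lessD1 of_nat_less_iff of_nat_mult of_nat_numeral mult.assoc)
    then have "real G \<le> (3 * real k)^2" by (simp add: power2_eq_square)
    then have "sqrt (real G) \<le> 3 * real k"
      using real_sqrt_le_mono real_sqrt_abs[of "3 * real k"] by fastforce
    then have "real n * sqrt (real G) \<le> real n * (3 * real k)" by (simp add: mult_left_mono)
    then show ?thesis using M(4) by simp
  qed
qed

text \<open>The number of blocks is 2^j for the largest depth j fitting the three budgets.\<close>

definition depth_fits :: "nat \<Rightarrow> nat \<Rightarrow> nat \<Rightarrow> nat \<Rightarrow> bool" where
  "depth_fits n S G j \<longleftrightarrow> 2^j \<le> n \<and> 4^j \<le> S \<and> 2 * 4^j \<le> G + 1"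

lemma maximal_depth:
  assumes "n > 0" "S > 0" "G > 0"
  shows "\<exists>j. depth_fits n S G j \<and> \<not> depth_fits n S G (Suc j)"
proof -
  have "\<not> depth_fits n S G n" unfolding depth_fits_def using less_exp[of n] by linarith
  then have none: "\<not> depth_fits n S G (LEAST j. \<not> depth_fits n S G j)" by (rule LeastI)
  moreover have "depth_fits n S G 0" unfolding depth_fits_def using assms by simp
  ultimately obtain j where j: "(LEAST j. \<not> depth_fits n S G j) = Suc j"
    by (metis not0_implies_Suc)
  then have "depth_fits n S G j" using not_less_Least[of j "\<lambda>j. \<not> depth_fits n S G j"] by simp
  then show ?thesis using none j by metis
qed

lemma block_length:
  fixes k n S :: nat
  assumes k: "0 < k" "k \<le> n" "k * k \<le> S"
  shows "\<exists>b>0. k * b \<le> n \<and> k * k * b \<le> S \<and> min (real n * real k) (real S) \<le> 2 * real (k * k * b)"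
proof -
  have half: "real a \<le> 2 * real d * real (a div d)" if "0 < d" "d \<le> a" for a d :: nat
  proof -
    have "d \<le> d * (a div d)" using that by (simp add: div_greater_zero_iff Suc_le_eq)
    then have "a \<le> 2 * d * (a div d)" using mod_less_divisor[OF that(1), of a] mult_div_mod_eq[of d a]
      by linarith
    then show ?thesis by (metis of_nat_le_iff of_nat_mult of_nat_numeral)
  qed
  define b where "b = min (n div k) (S div (k * k))"
  have "b > 0" unfolding b_def using k by (simp add: div_greater_zero_iff)
  moreover have "k * b \<le> n" "k * k * b \<le> S" unfolding b_def
    by (metis min.cobounded1 min.cobounded2 mult.commute order.trans div_times_less_eq_dividend mult_le_mono2)+
  moreover have "min (real n * real k) (real S) \<le> 2 * real (k * k * b)"
  proof (cases "n div k \<le> S div (k * k)")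
    case True
    then have "real n * real k \<le> 2 * real k * real b * real k"
      using half[of k n] k unfolding b_def by (simp add: mult_right_mono)
    then show ?thesis by (simp add: algebra_simps)
  next
    case False
    then have "real S \<le> 2 * real (k * k) * real b"
      using half[of "k * k" S] k unfolding b_def by simp
    then show ?thesis by (simp add: algebra_simps)
  qed
  ultimately show ?thesis by blast
qed

lemma four_power: "(4::nat)^j = 2^j * 2^j"
  by (metis power_mult_distrib num_double numeral_times_numeral)

lemma parameter_choice:
  assumes "n > 0" "S > 0" "G > 0"
  shows "\<exists>j b. b > 0 \<and> 2^j * b \<le> n \<and> 4^j * b \<le> S \<and> 2 * 4^j \<le> G + 1
           \<and> (target n S G)^2 \<le> 6 * real (4^j * b)"
proof -
  obtain j where fits: "depth_fits n S G j" and maximal: "\<not> depth_fits n S G (Suc j)"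
    using maximal_depth[OF assms] by blast
  define k :: nat where "k = 2^j"
  have four: "4^j = k * k" "4^Suc j = 4 * (k * k)" unfolding k_def by (simp_all add: four_power)
  have k: "0 < k" "k \<le> n" "k * k \<le> S" "2 * (k * k) \<le> G + 1"
    using fits unfolding depth_fits_def four k_def[symmetric] by (simp_all add: k_def)
  have "\<not> (2 * k \<le> n \<and> 4 * (k * k) \<le> S \<and> 8 * (k * k) \<le> G + 1)"
    using maximal unfolding depth_fits_def four k_def[symmetric] by (simp add: k_def)
  then have Mk: "(target n S G)^2 \<le> 3 * real n * real k" by (rule target_le_maximal_scale)
  obtain b where b: "b > 0" "k * b \<le> n" "k * k * b \<le> S"
    and big: "min (real n * real k) (real S) \<le> 2 * real (k * k * b)"
    using block_length[OF k(1-3)] by blast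
  have "(target n S G)^2 \<le> 3 * min (real n * real k) (real S)"
    using Mk target_bounds(3)[of n S G] by (simp add: min_def algebra_simps)
  also have "\<dots> \<le> 6 * real (4^j * b)" unfolding four(1) using big by linarith
  finally have "(target n S G)^2 \<le> 6 * real (4^j * b)" .
  moreover have "2^j * b \<le> n" "4^j * b \<le> S" "2 * 4^j \<le> G + 1"
    using b(2,3) k(4) unfolding four(1) k_def by simp_all
  ultimately show ?thesis using b(1) by (intro exI[of _ j] exI[of _ b]) simp
qed


theorem theorem3:
  "\<exists>c::real. c > 0 \<and>
     (\<forall>n S G :: nat. n > 0 \<longrightarrow> S > 0 \<longrightarrow> G > 0 \<longrightarrow>
        (\<exists>\<phi>. vars \<phi> \<subseteq> {..<n} \<and> leaves \<phi> \<le> S \<and> gates \<phi> \<le> G \<and>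
             real (Q n (eval \<phi>)) \<ge>
               c * min (real n) (min (sqrt (real S)) (sqrt (real n) * real G powr (1/4)))))"
proof (intro exI[of _ "1/250"] conjI allI impI)
  fix n S G :: nat assume n: "n > 0" and S: "S > 0" and G: "G > 0"
  obtain j b where b: "b > 0" and budget: "2^j * b \<le> n" "4^j * b \<le> S" "2 * 4^j \<le> G + 1"
    and large: "(target n S G)^2 \<le> 6 * real (4^j * b)"
    using parameter_choice[OF n S G] by blast
  define \<phi> where "\<phi> = xor_of_ors j b"
  define T where "T = real (Q n (eval \<phi>))"
  have vars: "vars \<phi> \<subseteq> {..<n}" using xor_of_ors(1)[of j b] budget(1) unfolding \<phi>_def by auto
  then have "\<exists>m Us Acc. computes n m Us Acc (eval \<phi>)"
    by (intro computable[OF n] eval_cong_vars) auto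
  then have "real (2^j * 2^j * b) \<le> 10368 * T^2"
    unfolding T_def \<phi>_def using xor_of_ors_sparse[OF b] budget(1) b
    by (intro Q_lower_bound_block_parity) auto
  then have "(target n S G)^2 \<le> 62208 * T^2"
    using large by (simp add: four_power)
  also have "\<dots> \<le> (250 * T)^2" by (simp add: power_mult_distrib)
  finally have "(target n S G)^2 \<le> (250 * T)^2" .
  then have "target n S G \<le> 250 * T" by (rule power2_le_imp_le) (simp add: T_def)
  then show "\<exists>\<phi>. vars \<phi> \<subseteq> {..<n} \<and> leaves \<phi> \<le> S \<and> gates \<phi> \<le> G \<and>
      real (Q n (eval \<phi>)) \<ge> 1/250 * min (real n) (min (sqrt (real S)) (sqrt (real n) * real G powr (1/4)))"
    using vars budget xor_of_ors(2,3)[of j b] unfolding target_def T_def \<phi>_def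
    by (intro exI[of _ "xor_of_ors j b"]) auto
qed (simp)

end
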